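(* Let $m>1$ be odd and let $\varphi:\mathbb{Z}_{2m}\to\{\pm1\}$ be a binary sequence of length $2m$. Define the binary $(2,m)$-array $\phi:\mathbb{Z}_2\times\mathbb{Z}_m\to\{\pm1\}$ as follows, where $a\in\{0,1\}$, $k$ is taken as an integer in $\{0,1,\ldots,m-1\}$, and arguments of $\varphi$ are read modulo $2m$. If $m\equiv 1 \pmod 4$: $\phi(a,k)=\varphi(k+am)$ if $k\equiv 0\pmod 4$; $\phi(a,k)=(-1)^{1-a}\varphi(k+(1-a)m)$ if $k\equiv 1\pmod 4$; $\phi(a,k)=-\varphi(k+am)$ if $k\equiv 2\pmod 4$; $\phi(a,k)=(-1)^{a}\varphi(k+(1-a)m)$ if $k\equiv 3\pmod 4$. If $m\equiv 3 \pmod 4$: $\phi(a,k)=(-1)^a\varphi(k+am)$ if $k\equiv 0\pmod 4$; $\phi(a,k)=\varphi(k+(1-a)m)$ if $k\equiv 1\pmod 4$; $\phi(a,k)=(-1)^{1-a}\varphi(k+am)$ if $k\equiv 2\pmod 4$; $\phi(a,k)=-\varphi(k+(1-a)m)$ if $k\equiv 3\pmod 4$. Then $\varphi$ is a GOBS if and only if $\phi$ is a GOBA$(2,m)$ of type $(1,0)$.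
   Context: For a finite abelian group $A$ (written additively) and a map $\psi:A\to\mathbb{C}$, the periodic autocorrelation is $R_\psi(x)=\sum_{b\in A}\psi(b)\overline{\psi(x+b)}$ for $x\in A$. Let $m$ be odd. A binary $(2,m)$-array is a map $\phi:\mathbb{Z}_2\times\mathbb{Z}_m\to\{\pm1\}$. Its expansion (with respect to type $(1,0)$) is $\phi':\mathbb{Z}_4\times\mathbb{Z}_m\to\{\pm1\}$ given by $\phi'(a,k)=\phi(a \bmod 2,k)$ for $a\in\{0,1\}$ and $\phi'(a,k)=-\phi(a\bmod 2,k)$ for $a\in\{2,3\}$. The array $\phi$ is a GOBA$(2,m)$ of type $(1,0)$ if $R_{\phi'}(x)\in\{0,4,-4\}$ for all $x\in(\mathbb{Z}_4\times\mathbb{Z}_m)\setminus\{(0,0),(2,0)\}$ and exactly $2m$ elements $x\in\mathbb{Z}_4\times\mathbb{Z}_m$ satisfy $R_{\phi'}(x)=0$. For a binary sequence $\varphi:\mathbb{Z}_{2m}\to\{\pm1\}$, its expansion is $\varphi':\mathbb{Z}_{4m}\to\{\pm1\}$ with $\varphi'(x)=\varphi(x\bmod 2m)$ for $x\in\{0,\ldots,2m-1\}$ and $\varphi'(x)=-\varphi(x\bmod 2m)$ for $x\in\{2m,\ldots,4m-1\}$. The sequence $\varphi$ is a GOBS (generalized optimal binary sequence) if $R_{\varphi'}(x)\in\{0,4,-4\}$ for all $x\in\mathbb{Z}_{4m}\setminus\{0,2m\}$ and exactly $2m$ elements $x\in\mathbb{Z}_{4m}$ satisfy $R_{\varphi'}(x)=0$.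 *)

theory Defs
  imports Complex_Main
begin

text \<open>Z_n is represented by {0..<n} with arithmetic mod n. Binary maps take values in {1,-1}
  as complex numbers.\<close>

definition binary_seq :: "nat \<Rightarrow> (nat \<Rightarrow> complex) \<Rightarrow> bool" where
  "binary_seq n f \<longleftrightarrow> (\<forall>x<n. f x \<in> {1, -1})"

definition autocorr_seq :: "nat \<Rightarrow> (nat \<Rightarrow> complex) \<Rightarrow> nat \<Rightarrow> complex" where
  "autocorr_seq n psi x = (\<Sum>b<n. psi b * cnj (psi ((x + b) mod n)))"

definition seq_expansion :: "nat \<Rightarrow> (nat \<Rightarrow> complex) \<Rightarrow> nat \<Rightarrow> complex" where
  "seq_expansion m f x = (if x < 2*m then f x else - f (x - 2*m))"

definition is_GOBS :: "nat \<Rightarrow> (nat \<Rightarrow> complex) \<Rightarrow> bool" where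
  "is_GOBS m f \<longleftrightarrow>
     (\<forall>x<4*m. x \<noteq> 0 \<and> x \<noteq> 2*m \<longrightarrow>
        autocorr_seq (4*m) (seq_expansion m f) x \<in> {0, 4, -4}) \<and>
     card {x. x < 4*m \<and> autocorr_seq (4*m) (seq_expansion m f) x = 0} = 2*m"

definition autocorr_arr :: "nat \<Rightarrow> nat \<Rightarrow> (nat \<Rightarrow> nat \<Rightarrow> complex) \<Rightarrow> nat \<Rightarrow> nat \<Rightarrow> complex" where
  "autocorr_arr r m psi x1 x2 =
     (\<Sum>b1<r. \<Sum>b2<m. psi b1 b2 * cnj (psi ((x1 + b1) mod r) ((x2 + b2) mod m)))"

text \<open>Expansion of a (2,m)-array with respect to type (1,0).\<close>
definition arr_expansion :: "(nat \<Rightarrow> nat \<Rightarrow> complex) \<Rightarrow> nat \<Rightarrow> nat \<Rightarrow> complex" where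
  "arr_expansion g a k = (if a < 2 then g a k else - g (a - 2) k)"

definition is_GOBA_2m_10 :: "nat \<Rightarrow> (nat \<Rightarrow> nat \<Rightarrow> complex) \<Rightarrow> bool" where
  "is_GOBA_2m_10 m g \<longleftrightarrow>
     (\<forall>x1<4. \<forall>x2<m. (x1, x2) \<notin> {(0,0), (2,0)} \<longrightarrow>
        autocorr_arr 4 m (arr_expansion g) x1 x2 \<in> {0, 4, -4}) \<and>
     card {(x1, x2). x1 < 4 \<and> x2 < m \<and> autocorr_arr 4 m (arr_expansion g) x1 x2 = 0} = 2*m"

definition arr_of_seq :: "nat \<Rightarrow> (nat \<Rightarrow> complex) \<Rightarrow> nat \<Rightarrow> nat \<Rightarrow> complex" where
  "arr_of_seq m f a k =
    (let A = f ((k + a*m) mod (2*m)); B = f ((k + (1 - a)*m) mod (2*m)) in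
     if m mod 4 = 1 then
       (if k mod 4 = 0 then A
        else if k mod 4 = 1 then (-1) ^ (1 - a) * B
        else if k mod 4 = 2 then - A
        else (-1) ^ a * B)
     else
       (if k mod 4 = 0 then (-1) ^ a * A
        else if k mod 4 = 1 then B
        else if k mod 4 = 2 then (-1) ^ (1 - a) * A
        else - B))"

end

theory Submission
  imports Defs "HOL-Number_Theory.Cong"
begin

text \<open>For odd m the Chinese remainder map x \<mapsto> (x mod 4, x mod m) is a group isomorphism
  from Z_4m onto Z_4 \<times> Z_m sending 0 and 2m to (0,0) and (2,0). The signs and shifts in the
  definition of the array are arranged precisely so that this isomorphism carries the expansion
  of the array to the expansion of the sequence: the entry at x = k + j m (k < m, j < 4) lands
  at (x mod 4, k), and x mod 4 is fixed by k mod 4, j and m mod 4. Periodic autocorrelation is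
  invariant under group isomorphisms, so the condition on the values off the two trivial shifts
  and the number of zeros transfer in both directions.\<close>

lemma bij_betw_mod_pair:
  fixes n m :: nat
  assumes "coprime n m"
  shows "bij_betw (\<lambda>x. (x mod n, x mod m)) {..<n*m} ({..<n} \<times> {..<m})"
proof -
  have inj: "inj_on (\<lambda>x. (x mod n, x mod m)) {..<n*m}"
  proof (rule inj_onI)
    fix x y assume "x \<in> {..<n*m}" "y \<in> {..<n*m}" "(x mod n, x mod m) = (y mod n, y mod m)"
    then have "[x = y] (mod n*m)"
      by (intro coprime_cong_mult_nat[OF _ _ assms]) (simp_all add: cong_def)
    then show "x = y" using \<open>x \<in> {..<n*m}\<close> \<open>y \<in> {..<n*m}\<close>
      by (auto intro: cong_less_modulus_unique_nat)
  qed
  moreover have "(\<lambda>x. (x mod n, x mod m)) ` {..<n*m} \<subseteq> {..<n} \<times> {..<m}"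
    by (auto intro!: mod_less_divisor) (metis gr0I mult_0 mult_0_right not_less0)+
  moreover have "card ((\<lambda>x. (x mod n, x mod m)) ` {..<n*m}) = card ({..<n} \<times> {..<m})"
    using card_image[OF inj] by (simp add: card_cartesian_product)
  ultimately show ?thesis
    by (simp add: bij_betw_def card_subset_eq)
qed

lemma card_Collect_bij_betw:
  assumes "bij_betw h A B"
  shows "card {y \<in> B. P y} = card {x \<in> A. P (h x)}"
proof -
  have "bij_betw h {x \<in> A. P (h x)} {y \<in> B. P y}"
    using assms by (auto simp: bij_betw_def inj_on_def)
  then show ?thesis by (simp add: bij_betw_same_card)
qed

lemma autocorr_arr_mod_pair:
  fixes G :: "nat \<Rightarrow> nat \<Rightarrow> complex" and F :: "nat \<Rightarrow> complex"
  assumes "coprime n m" "x < n*m"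
    and G_F: "\<And>y. y < n*m \<Longrightarrow> G (y mod n) (y mod m) = F y"
  shows "autocorr_arr n m G (x mod n) (x mod m) = autocorr_seq (n*m) F x"
proof -
  have n_m_pos: "n > 0" "m > 0"
    using assms(2) by (auto intro!: gr0I)
  define h where
    "h = (\<lambda>(b1, b2). G b1 b2 * cnj (G ((x mod n + b1) mod n) ((x mod m + b2) mod m)))"
  have "autocorr_arr n m G (x mod n) (x mod m) = sum h ({..<n} \<times> {..<m})"
    unfolding autocorr_arr_def h_def by (simp add: sum.cartesian_product)
  also have "\<dots> = (\<Sum>y<n*m. h (y mod n, y mod m))"
    using sum.reindex_bij_betw[OF bij_betw_mod_pair[OF assms(1)], of h] by simp
  also have "\<dots> = autocorr_seq (n*m) F x"
    unfolding autocorr_seq_def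
  proof (rule sum.cong)
    fix y assume "y \<in> {..<n*m}"
    moreover have "(x + y) mod (n*m) < n*m"
      using n_m_pos by simp
    moreover have "(x mod n + y mod n) mod n = ((x + y) mod (n*m)) mod n"
      "(x mod m + y mod m) mod m = ((x + y) mod (n*m)) mod m"
      by (simp_all add: mod_add_eq mod_mod_cancel)
    ultimately show "h (y mod n, y mod m) = F y * cnj (F ((x + y) mod (n*m)))"
      unfolding h_def by (simp add: G_F)
  qed simp
  finally show ?thesis .
qed

lemma arr_expansion_arr_of_seq_mod_pair:
  fixes f :: "nat \<Rightarrow> complex"
  assumes "odd m" "x < 4*m"
  shows "arr_expansion (arr_of_seq m f) (x mod 4) (x mod m) = seq_expansion m f x"
proof -
  define k j where "k = x mod m" and "j = x div m"
  have m_pos: "m > 0"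
    using assms(1) by (simp add: odd_pos)
  have x: "x = k + j*m" and k: "k < m" and j: "j < 4"
    using assms m_pos by (simp_all add: k_def j_def less_mult_imp_div_less)
  have "x mod 4 = (k mod 4 + j * (m mod 4)) mod 4"
    unfolding x by (metis mod_add_left_eq mod_add_right_eq mod_mult_right_eq)
  moreover have "m mod 4 = 1 \<or> m mod 4 = 3"
    using assms(1) by presburger
  moreover have "k mod 4 = 0 \<or> k mod 4 = 1 \<or> k mod 4 = 2 \<or> k mod 4 = 3"
    by presburger
  moreover have "j = 0 \<or> j = 1 \<or> j = 2 \<or> j = 3"
    using j by auto
  moreover have "k mod (2*m) = k" "(k + m) mod (2*m) = k + m"
    using k by simp_all
  moreover have "seq_expansion m f k = f k" "seq_expansion m f (k + m) = f (k + m)"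
    "seq_expansion m f (k + 2*m) = - f k" "seq_expansion m f (k + 3*m) = - f (k + m)"
    using k by (simp_all add: seq_expansion_def add.commute)
  ultimately show ?thesis
    unfolding k_def[symmetric]
    by (elim disjE) (simp_all add: arr_expansion_def arr_of_seq_def Let_def x)
qed

lemma coprime_four_odd:
  fixes m :: nat
  assumes "odd m"
  shows "coprime 4 m"
  using assms coprime_power_left_iff[of 2 2 m] by simp

lemma autocorr_arr_of_seq_mod_pair:
  fixes f :: "nat \<Rightarrow> complex"
  assumes "odd m" "x < 4*m"
  shows "autocorr_arr 4 m (arr_expansion (arr_of_seq m f)) (x mod 4) (x mod m)
    = autocorr_seq (4*m) (seq_expansion m f) x"
  using assms by (intro autocorr_arr_mod_pair coprime_four_odd arr_expansion_arr_of_seq_mod_pair)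

lemma mod_pair_exceptional_iff:
  fixes m x :: nat
  assumes "odd m" "x < 4*m"
  shows "(x mod 4, x mod m) \<in> {(0, 0), (2, 0)} \<longleftrightarrow> x \<in> {0, 2*m}"
proof -
  have inj: "inj_on (\<lambda>x. (x mod 4, x mod m)) {..<4*m}"
    using bij_betw_mod_pair[OF coprime_four_odd[OF assms(1)]] by (rule bij_betw_imp_inj_on)
  have "(x mod 4, x mod m) = (y mod 4, y mod m) \<longleftrightarrow> x = y" if "y < 4*m" for y
    by (rule inj_on_eq_iff[OF inj]) (use assms(2) that in auto)
  from this[of 0] this[of "2*m"] have
    "(x mod 4, x mod m) \<in> {(0 mod 4, 0 mod m), (2*m mod 4, 2*m mod m)}
      \<longleftrightarrow> x \<in> {0, 2*m}"
    using assms by (simp only: insert_iff empty_iff)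
  moreover have "2*m mod 4 = 2"
    using assms(1) by presburger
  ultimately show ?thesis
    by simp
qed

theorem lemma1:
  fixes m :: nat and f :: "nat \<Rightarrow> complex"
  assumes "odd m" and "m > 1" and "binary_seq (2*m) f"
  shows "is_GOBS m f \<longleftrightarrow> is_GOBA_2m_10 m (arr_of_seq m f)"
proof -
  let ?crt = "\<lambda>x. (x mod 4, x mod m)"
  define R where "R = autocorr_seq (4*m) (seq_expansion m f)"
  define A where "A = autocorr_arr 4 m (arr_expansion (arr_of_seq m f))"
  have bij: "bij_betw ?crt {..<4*m} ({..<4} \<times> {..<m})"
    by (rule bij_betw_mod_pair[OF coprime_four_odd[OF assms(1)]])
  have A_crt: "case_prod A (?crt x) = R x" if "x < 4*m" for x
    unfolding A_def R_def using autocorr_arr_of_seq_mod_pair[OF assms(1) that] by simp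
  have peaks:
    "(\<forall>p \<in> {..<4} \<times> {..<m}. p \<notin> {(0, 0), (2, 0)} \<longrightarrow> case_prod A p \<in> {0, 4, -4})
      \<longleftrightarrow> (\<forall>x \<in> {..<4*m}. x \<notin> {0, 2*m} \<longrightarrow> R x \<in> {0, 4, -4})"
    unfolding bij_betw_imp_surj_on[OF bij, symmetric] ball_simps(9)
    by (intro ball_cong refl)
      (simp only: mod_pair_exceptional_iff[OF assms(1)] A_crt lessThan_iff)
  have "card {p \<in> {..<4} \<times> {..<m}. case_prod A p = 0}
      = card {x \<in> {..<4*m}. case_prod A (?crt x) = 0}"
    by (rule card_Collect_bij_betw[OF bij])
  also have "{x \<in> {..<4*m}. case_prod A (?crt x) = 0} = {x \<in> {..<4*m}. R x = 0}"
    using A_crt by auto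
  finally have zeros: "card {p \<in> {..<4} \<times> {..<m}. case_prod A p = 0}
      = card {x \<in> {..<4*m}. R x = 0}" .
  have "{(x1, x2). x1 < 4 \<and> x2 < m \<and> A x1 x2 = 0}
      = {p \<in> {..<4} \<times> {..<m}. case_prod A p = 0}"
    by auto
  then show ?thesis
    using peaks zeros unfolding is_GOBS_def is_GOBA_2m_10_def A_def[symmetric] R_def[symmetric]
    by (simp add: Ball_def) blast
qed

end
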